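(* (1) There exists a function $r:[\omega]^\omega\to[\omega]^\omega$ such that for every $x,z\in[\omega]^\omega$ there is $y\in[x]^\omega$ with $r(y)=z$. (2) There exists a function $r:[\omega]^\omega\to 2^{\aleph_0}$ such that for every $x\in[\omega]^\omega$ and every $\beta<2^{\aleph_0}$ there is $y\in[x]^\omega$ with $r(y)=\beta$. (3) For every infinite cardinal $\lambda$ there is a function $r:[\lambda]^\omega\to 2^{\aleph_0}$ such that for every $x\in[\lambda]^\omega$ and every $\beta<2^{\aleph_0}$ there is $y\in[x]^\omega$ with $r(y)=\beta$ (and likewise with $[\omega]^\omega$ as target in place of $2^{\aleph_0}$).
   Context: Work in ZFC. For a set $X$, $[X]^\omega$ denotes the set of countably infinite subsets of $X$. *)

theory Defs
  imports Main "HOL-Library.Countable_Set"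
begin

definition ctbl_inf_subsets :: "'a set \<Rightarrow> 'a set set" where
  "ctbl_inf_subsets X = {y. y \<subseteq> X \<and> countable y \<and> infinite y}"

end

theory Submission
  imports Defs
begin

text \<open>
  On \<open>\<omega>\<close> there are continuum many pairs \<open>(x, \<beta>)\<close> with \<open>x\<close> infinite, and each such \<open>x\<close> has
  continuum many infinite subsets; so a transfinite recursion chooses pairwise distinct infinite
  \<open>y\<^sub>x\<^sub>\<beta> \<subseteq> x\<close>, and one sets \<open>r(y\<^sub>x\<^sub>\<beta>) = \<beta>\<close>. (Some choice is unavoidable: by Galvin--Prikry
  no Borel map works.)

  For an arbitrary set, fix a well-order. The elements of an infinite \<open>x\<close> having only finitely
  many predecessors in \<open>x\<close> form an infinite set \<open>x'\<close> of order type \<open>\<omega>\<close>, and every infinite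
  \<open>y \<subseteq> x'\<close> is cofinal in \<open>x'\<close>, hence has the same strict downward closure \<open>D\<close>. A cofinal
  \<open>\<omega>\<close>-sequence chosen canonically from \<open>D\<close> assigns each element a level in \<open>\<omega>\<close>, finite-to-one on
  \<open>x'\<close>; since \<open>D\<close> is recoverable from \<open>y\<close> alone, applying the \<open>\<omega>\<close>-map to the set of levels of
  \<open>y\<close> transfers it. Finite values are finally replaced by \<open>\<omega>\<close> to get infinite targets.
\<close>

unbundle cardinal_syntax

lemma ex_inj_on_choice:
  assumes large: "\<And>i. i \<in> I \<Longrightarrow> |I| \<le>o |S i|"
  shows "\<exists>g. inj_on g I \<and> (\<forall>i\<in>I. g i \<in> S i)"
proof -
  let ?r = "|I|"
  have wo: "Well_order ?r" and field: "Field ?r = I"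
    by (rule card_of_Well_order, rule Field_card_of)
  have wf: "wf (?r - Id)"
    using wo by (simp add: well_order_on_def)
  define F where "F f i = (SOME s. s \<in> S i \<and> s \<notin> f ` underS ?r i)" for f i
  define g where "g = wfrec (?r - Id) F"
  have fresh: "g i \<in> S i \<and> g i \<notin> g ` underS ?r i" if "i \<in> I" for i
  proof -
    have "|g ` underS ?r i| \<le>o |underS ?r i|"
      by (rule card_of_image)
    moreover have "|underS ?r i| <o ?r"
      using card_of_underS[OF card_of_Card_order, of i I] that field by simp
    ultimately have "|g ` underS ?r i| <o |S i|"
      using large[OF that] ordLeq_ordLess_trans ordLess_ordLeq_trans by blast
    then have "\<not> S i \<subseteq> g ` underS ?r i"
      using card_of_mono1 not_ordLess_ordLeq by blast
    moreover have cut_eq: "cut g (?r - Id) i ` underS ?r i = g ` underS ?r i"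
      by (rule image_cong) (auto simp: cut_apply underS_def)
    ultimately have "\<exists>s. s \<in> S i \<and> s \<notin> cut g (?r - Id) i ` underS ?r i"
      by blast
    then have "F (cut g (?r - Id) i) i \<in> S i \<and> F (cut g (?r - Id) i) i \<notin> g ` underS ?r i"
      unfolding F_def cut_eq by (rule someI_ex)
    moreover have "g i = F (cut g (?r - Id) i) i"
      unfolding g_def by (rule wfrec[OF wf])
    ultimately show ?thesis
      by simp
  qed
  have g_distinct: "g a \<noteq> g b" if "b \<in> I" "a \<in> underS ?r b" for a b
    using fresh[OF that(1)] imageI[OF that(2), of g] by auto
  have "inj_on g I"
  proof (rule inj_onI, rule ccontr)
    fix i j assume "i \<in> I" "j \<in> I" "g i = g j" "i \<noteq> j"
    moreover have "i \<in> underS ?r j \<or> j \<in> underS ?r i"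
      using wo_rel.TOTALS[of ?r] wo field \<open>i \<in> I\<close> \<open>j \<in> I\<close> \<open>i \<noteq> j\<close>
      by (auto simp: wo_rel_def underS_def)
    ultimately show False
      using g_distinct by metis
  qed
  then show ?thesis
    using fresh by blast
qed

lemma card_of_Pow_UNIV_nat_le_infinite_subsets:
  fixes X :: "'a set"
  assumes "infinite X"
  shows "|UNIV :: nat set set| \<le>o |{y. y \<subseteq> X \<and> infinite y}|"
proof -
  obtain f :: "nat \<Rightarrow> 'a" where f: "inj f" "range f \<subseteq> X"
    using infinite_countable_subset[OF assms] by blast
  define G where "G \<beta> = f ` ((\<lambda>n. 2 * n) ` \<beta> \<union> range (\<lambda>n. 2 * n + 1))" for \<beta> :: "nat set"
  have "inj G"
  proof (rule injI)
    fix \<alpha> \<beta> assume "G \<alpha> = G \<beta>"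
    then have "(\<lambda>n. 2 * n) ` \<alpha> \<union> range (\<lambda>n. 2 * n + 1) = (\<lambda>n. 2 * n) ` \<beta> \<union> range (\<lambda>n. 2 * n + 1)"
      using f(1) by (simp add: G_def inj_image_eq_iff)
    moreover have "2 * n \<noteq> 2 * m + 1" for n m :: nat
      by presburger
    then have "2 * n \<in> (\<lambda>n. 2 * n) ` A \<union> range (\<lambda>n. 2 * n + 1) \<longleftrightarrow> n \<in> A" for n and A :: "nat set"
      by auto
    ultimately show "\<alpha> = \<beta>"
      by blast
  qed
  moreover have "range G \<subseteq> {y. y \<subseteq> X \<and> infinite y}"
  proof -
    have "infinite (range (\<lambda>n::nat. 2 * n + 1))"
      by (rule range_inj_infinite) (auto simp: inj_def)
    then have "infinite ((\<lambda>n. 2 * n) ` \<beta> \<union> range (\<lambda>n. 2 * n + 1))" for \<beta> :: "nat set"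
      by simp
    then have "infinite (G \<beta>)" for \<beta>
      by (simp add: G_def finite_image_iff[OF inj_on_subset[OF f(1) subset_UNIV]])
    then show ?thesis
      using f(2) by (auto simp: G_def)
  qed
  ultimately show ?thesis
    using card_of_ordLeq by blast
qed

lemma ex_nat_realizer:
  "\<exists>R :: nat set \<Rightarrow> nat set. \<forall>x \<beta>. infinite x \<longrightarrow> (\<exists>y\<subseteq>x. infinite y \<and> R y = \<beta>)"
proof -
  let ?I = "{x :: nat set. infinite x} \<times> (UNIV :: nat set set)"
  define S where "S i = {y. y \<subseteq> fst i \<and> infinite y}" for i :: "nat set \<times> nat set"
  have "|?I| \<le>o |S i|" if "i \<in> ?I" for i
  proof -
    have "|?I| \<le>o |(UNIV :: nat set set) \<times> (UNIV :: nat set set)|"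
      by (rule card_of_mono1) auto
    also have "|(UNIV :: nat set set) \<times> (UNIV :: nat set set)| =o |UNIV :: nat set set|"
      by (rule card_of_Times_same_infinite) (simp add: infinite_UNIV_char_0 flip: Pow_UNIV)
    also have "|UNIV :: nat set set| \<le>o |S i|"
      using card_of_Pow_UNIV_nat_le_infinite_subsets that by (auto simp: S_def)
    finally show ?thesis .
  qed
  then obtain g where g: "inj_on g ?I" "\<forall>i\<in>?I. g i \<in> S i"
    using ex_inj_on_choice by blast
  show ?thesis
  proof (rule exI[of _ "\<lambda>y. snd (the_inv_into ?I g y)"], intro allI impI)
    fix x \<beta> :: "nat set" assume "infinite x"
    then have "(x, \<beta>) \<in> ?I"
      by simp
    then show "\<exists>y\<subseteq>x. infinite y \<and> snd (the_inv_into ?I g y) = \<beta>"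
      using g by (intro exI[of _ "g (x, \<beta>)"]) (auto simp: S_def the_inv_into_f_f)
  qed
qed

definition finite_rank_part :: "'a rel \<Rightarrow> 'a set \<Rightarrow> 'a set" where
  "finite_rank_part r x = {b \<in> x. finite (x \<inter> underS r b)}"

definition strict_downset :: "'a rel \<Rightarrow> 'a set \<Rightarrow> 'a set" where
  "strict_downset r y = (\<Union>b\<in>y. underS r b)"

definition cofinal_seq :: "'a rel \<Rightarrow> 'a set \<Rightarrow> nat \<Rightarrow> 'a" where
  "cofinal_seq r D = (SOME s. range s \<subseteq> D \<and> D = (\<Union>n. underS r (s n)))"

definition downset_level :: "'a rel \<Rightarrow> 'a set \<Rightarrow> 'a \<Rightarrow> nat" where
  "downset_level r y a = (LEAST n. a \<in> underS r (cofinal_seq r (strict_downset r y) n))"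

lemma cofinal_seq_strict_downset:
  assumes "countable y" "y \<noteq> {}" "y \<subseteq> strict_downset r y"
  defines "s \<equiv> cofinal_seq r (strict_downset r y)"
  shows "range s \<subseteq> strict_downset r y" "strict_downset r y = (\<Union>n. underS r (s n))"
proof -
  let ?P = "\<lambda>s. range s \<subseteq> strict_downset r y \<and> strict_downset r y = (\<Union>n. underS r (s n))"
  have "\<Union>(underS r ` range (from_nat_into y)) = strict_downset r y"
    using assms(1,2) by (simp add: strict_downset_def)
  then have "?P (from_nat_into y)"
    using assms(2,3) range_from_nat_into_subset[of y] by (auto simp only: image_image)
  then have "?P s"
    unfolding s_def cofinal_seq_def by (rule someI[of ?P])
  then show "range s \<subseteq> strict_downset r y" "strict_downset r y = (\<Union>n. underS r (s n))"
    by auto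
qed

context
  fixes r :: "'a rel"
  assumes well_order: "Well_order r" and field: "Field r = UNIV"
begin

lemma underS_trans: "a \<in> underS r b \<Longrightarrow> b \<in> underS r c \<Longrightarrow> a \<in> underS r c"
  using underS_incr[of r b c] well_order by (auto simp: order_on_defs underS_def)

lemma underS_total:
  assumes "a \<noteq> b"
  shows "a \<in> underS r b \<or> b \<in> underS r a"
proof -
  have "(a, b) \<in> r \<or> (b, a) \<in> r"
    using wo_rel.TOTALS[of r] well_order field by (simp add: wo_rel_def)
  then show ?thesis
    using assms by (auto simp: underS_def)
qed

lemma infinite_finite_rank_part:
  assumes "infinite x"
  shows "infinite (finite_rank_part r x)"
proof
  let ?x' = "finite_rank_part r x"
  assume fin: "finite ?x'"
  have "wf (r - Id)"
    using well_order by (simp add: well_order_on_def)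
  moreover have "x - ?x' \<noteq> {}"
    using fin assms by (metis Diff_eq_empty_iff finite_subset)
  ultimately obtain m where m: "m \<in> x - ?x'" and min: "\<And>c. (c, m) \<in> r - Id \<Longrightarrow> c \<notin> x - ?x'"
    by (rule wfE_min') blast
  have "x \<inter> underS r m \<subseteq> ?x'"
    using min by (auto simp: underS_def)
  then have "m \<in> ?x'"
    using m fin finite_subset by (auto simp: finite_rank_part_def)
  then show False
    using m by blast
qed

lemma countable_finite_rank_part: "countable (finite_rank_part r x)"
proof -
  let ?x' = "finite_rank_part r x"
  have card_less: "card (x \<inter> underS r a) < card (x \<inter> underS r b)"
    if "a \<in> ?x'" "b \<in> ?x'" "a \<in> underS r b" for a b
  proof (rule psubset_card_mono)
    show "finite (x \<inter> underS r b)"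
      using that(2) by (simp add: finite_rank_part_def)
    show "x \<inter> underS r a \<subset> x \<inter> underS r b"
      using that underS_trans underS_notIn[of a r] by (auto simp: finite_rank_part_def)
  qed
  have "inj_on (\<lambda>b. card (x \<inter> underS r b)) ?x'"
    by (rule inj_onI) (metis card_less underS_total nat_neq_iff)
  then show ?thesis
    by (rule countableI)
qed

lemma finite_rank_part_cofinal:
  assumes "y \<subseteq> finite_rank_part r x" "infinite y" "b \<in> finite_rank_part r x"
  shows "\<exists>b'\<in>y. b \<in> underS r b'"
proof -
  have "finite (x \<inter> underS r b)"
    using assms(3) by (simp add: finite_rank_part_def)
  then have "\<not> y \<subseteq> insert b (x \<inter> underS r b)"
    using assms(2) finite_subset by blast
  then obtain b' where "b' \<in> y" "b' \<noteq> b" "b' \<notin> underS r b"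
    using assms(1) by (auto simp: finite_rank_part_def)
  then show ?thesis
    using underS_total by blast
qed

lemma strict_downset_eq_finite_rank_part:
  assumes "y \<subseteq> finite_rank_part r x" "infinite y"
  shows "strict_downset r y = strict_downset r (finite_rank_part r x)"
proof
  show "strict_downset r y \<subseteq> strict_downset r (finite_rank_part r x)"
    using assms(1) by (auto simp: strict_downset_def)
  show "strict_downset r (finite_rank_part r x) \<subseteq> strict_downset r y"
    using finite_rank_part_cofinal[OF assms] underS_trans by (fastforce simp: strict_downset_def)
qed

lemma infinite_downset_level_image:
  assumes "infinite x"
  defines "x' \<equiv> finite_rank_part r x"
  shows "infinite (downset_level r x' ` x')"
proof
  let ?s = "cofinal_seq r (strict_downset r x')"
  have inf: "infinite x'"
    using assms infinite_finite_rank_part by simp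
  have x'_sub: "x' \<subseteq> strict_downset r x'"
    using finite_rank_part_cofinal[OF _ inf] by (auto simp: x'_def strict_downset_def)
  have s: "range ?s \<subseteq> strict_downset r x'" "strict_downset r x' = (\<Union>n. underS r (?s n))"
    using cofinal_seq_strict_downset[OF countable_finite_rank_part _ x'_sub[unfolded x'_def]] inf
    unfolding x'_def by (metis finite.emptyI)+
  have level: "a \<in> underS r (?s (downset_level r x' a))" if "a \<in> x'" for a
  proof -
    have "\<exists>n. a \<in> underS r (?s n)"
      using that x'_sub s(2) by blast
    then show ?thesis
      unfolding downset_level_def by (rule LeastI_ex)
  qed
  have finite_below: "finite (x' \<inter> underS r (?s n))" for n
  proof -
    obtain b where b: "b \<in> x'" "?s n \<in> underS r b"
      using s(1) by (auto simp: strict_downset_def)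
    then have "x' \<inter> underS r (?s n) \<subseteq> x \<inter> underS r b"
      using underS_trans by (auto simp: x'_def finite_rank_part_def)
    moreover have "finite (x \<inter> underS r b)"
      using b(1) by (simp add: x'_def finite_rank_part_def)
    ultimately show ?thesis
      by (rule finite_subset)
  qed
  assume "finite (downset_level r x' ` x')"
  then obtain k where "\<forall>a\<in>x'. downset_level r x' a \<le> k"
    by (auto simp: finite_nat_set_iff_bounded_le)
  then have "x' \<subseteq> (\<Union>n\<le>k. x' \<inter> underS r (?s n))"
    using level by blast
  then show False
    using inf finite_below by (meson finite_UN_I finite_atMost finite_subset)
qed

end

lemma ex_realizer:
  "\<exists>R :: 'a set \<Rightarrow> nat set. \<forall>x \<beta>. infinite x \<longrightarrow> (\<exists>y\<in>ctbl_inf_subsets x. R y = \<beta>)"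
proof -
  obtain r :: "'a rel" where r: "Well_order r" "Field r = UNIV"
    using well_ordering[where 'a='a] by blast
  obtain R0 :: "nat set \<Rightarrow> nat set"
    where R0: "\<forall>z \<beta>. infinite z \<longrightarrow> (\<exists>z'\<subseteq>z. infinite z' \<and> R0 z' = \<beta>)"
    using ex_nat_realizer by blast
  define R where "R y = R0 (downset_level r y ` y)" for y
  have "\<exists>y\<in>ctbl_inf_subsets x. R y = \<beta>" if x: "infinite x" for x \<beta>
  proof -
    define x' where "x' = finite_rank_part r x"
    obtain z where z: "z \<subseteq> downset_level r x' ` x'" "infinite z" "R0 z = \<beta>"
      using R0 infinite_downset_level_image[OF r x] unfolding x'_def by blast
    then obtain y where y: "y \<subseteq> x'" "z = downset_level r x' ` y"
      by (auto simp: subset_image_iff)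
    have "infinite y"
      using y(2) z(2) by auto
    then have "downset_level r y = downset_level r x'"
      using strict_downset_eq_finite_rank_part[OF r y(1)[unfolded x'_def]]
      by (simp add: fun_eq_iff downset_level_def x'_def)
    then have "R y = \<beta>"
      using y(2) z(3) by (simp add: R_def)
    moreover have "y \<in> ctbl_inf_subsets x"
      using y(1) \<open>infinite y\<close> countable_subset[OF _ countable_finite_rank_part[OF r, of x]]
      by (auto simp: ctbl_inf_subsets_def x'_def finite_rank_part_def)
    ultimately show ?thesis
      by blast
  qed
  then show ?thesis
    by blast
qed

lemma ex_realizer_infinite_targets:
  "\<exists>R :: 'a set \<Rightarrow> nat set. (\<forall>y\<in>ctbl_inf_subsets L. R y \<in> ctbl_inf_subsets UNIV) \<and>
     (\<forall>x\<in>ctbl_inf_subsets L. \<forall>z\<in>ctbl_inf_subsets UNIV. \<exists>y\<in>ctbl_inf_subsets x. R y = z)"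
proof -
  obtain R :: "'a set \<Rightarrow> nat set"
    where R: "\<forall>x \<beta>. infinite x \<longrightarrow> (\<exists>y\<in>ctbl_inf_subsets x. R y = \<beta>)"
    using ex_realizer by blast
  define R' where "R' y = (if infinite (R y) then R y else UNIV)" for y
  have "R' y \<in> ctbl_inf_subsets UNIV" for y
    by (simp add: R'_def ctbl_inf_subsets_def)
  moreover have "\<exists>y\<in>ctbl_inf_subsets x. R' y = z"
    if "x \<in> ctbl_inf_subsets L" "z \<in> ctbl_inf_subsets UNIV" for x z
  proof -
    have "infinite x"
      using that(1) by (simp add: ctbl_inf_subsets_def)
    then obtain y where "y \<in> ctbl_inf_subsets x" "R y = z"
      using R by blast
    then show ?thesis
      using that(2) by (auto simp: R'_def ctbl_inf_subsets_def)
  qed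
  ultimately show ?thesis
    by blast
qed

theorem lemma2p1:
  shows
  "(\<exists>r :: nat set \<Rightarrow> nat set.
      (\<forall>y \<in> ctbl_inf_subsets (UNIV :: nat set). r y \<in> ctbl_inf_subsets (UNIV :: nat set)) \<and>
      (\<forall>x \<in> ctbl_inf_subsets (UNIV :: nat set). \<forall>z \<in> ctbl_inf_subsets (UNIV :: nat set).
         \<exists>y \<in> ctbl_inf_subsets x. r y = z))
   \<and>
   (\<exists>r :: nat set \<Rightarrow> nat set.
      \<forall>x \<in> ctbl_inf_subsets (UNIV :: nat set). \<forall>\<beta> :: nat set.
         \<exists>y \<in> ctbl_inf_subsets x. r y = \<beta>)
   \<and>
   (\<forall>L :: 'a set. infinite L \<longrightarrow>
      (\<exists>r :: 'a set \<Rightarrow> nat set.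
         \<forall>x \<in> ctbl_inf_subsets L. \<forall>\<beta> :: nat set.
           \<exists>y \<in> ctbl_inf_subsets x. r y = \<beta>)
      \<and>
      (\<exists>r :: 'a set \<Rightarrow> nat set.
         (\<forall>y \<in> ctbl_inf_subsets L. r y \<in> ctbl_inf_subsets (UNIV :: nat set)) \<and>
         (\<forall>x \<in> ctbl_inf_subsets L. \<forall>z \<in> ctbl_inf_subsets (UNIV :: nat set).
            \<exists>y \<in> ctbl_inf_subsets x. r y = z)))"
proof -
  have realizer: "\<exists>R :: 'b set \<Rightarrow> nat set. \<forall>x\<in>ctbl_inf_subsets L. \<forall>\<beta>. \<exists>y\<in>ctbl_inf_subsets x. R y = \<beta>"
    for L :: "'b set"
  proof -
    obtain R :: "'b set \<Rightarrow> nat set"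
      where "\<forall>x \<beta>. infinite x \<longrightarrow> (\<exists>y\<in>ctbl_inf_subsets x. R y = \<beta>)"
      using ex_realizer by blast
    then have "\<forall>x\<in>ctbl_inf_subsets L. \<forall>\<beta>. \<exists>y\<in>ctbl_inf_subsets x. R y = \<beta>"
      by (simp add: ctbl_inf_subsets_def)
    then show ?thesis
      by blast
  qed
  show ?thesis
    by (intro conjI allI impI realizer ex_realizer_infinite_targets)
qed

end
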